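(* In the setting of the context, for every unital hermitian cone $N$ on $(K,\ast)$ the following are equivalent: (1) $a_\sigma n^\sigma\in N$ for every $n\in N$ and $\sigma\in G$; (2) $N=M\cap K$ for some unital hermitian cone $M$ on $(D,\ast)$; (3) $N=\lambda^{-1}(L)\cap K$ for some unital hermitian cone $L$ on $(M_n(K),\#)$.
   Context: Let $K/F$ be a finite Galois extension of fields of characteristic $0$ with Galois group $G$, $n=|G|$; write $k^\sigma$ for the image of $k$ under $\sigma$. Let $\Phi$ be a normalized $2$-cocycle and $D=(K/F,\Phi)$ the crossed product: right $K$-vector space with basis $(e_\sigma)_{\sigma\in G}$, $e_{\mathrm{id}}=1$, multiplication $(\sum e_\sigma c_\sigma)(\sum e_\tau d_\tau)=\sum e_{\sigma\tau}\Phi(\sigma,\tau)c_\sigma^\tau d_\tau$. Assume $D$ is a division algebra and $\ast$ an involution on $D$ with $K^\ast\subseteq K$, such that $a_\sigma:=e_\sigma^\ast e_\sigma\in K$ for all $\sigma\in G$ and some unital hermitian cone on $(K,\ast)$ contains all $a_\sigma$. A unital hermitian cone on a ring $R$ with involution $\ast$ is a subset $M\subseteq\{r:r^\ast=r\}$ with $1\in M$, $M+M\subseteq M$, $aMa^\ast\subseteq M$ for all $a\in R$, $M\cap-M=\{0\}$. Let $\lambda\colon D\to M_n(K)$ be the left regular representation, $ae_\tau=\sum_\sigma e_\sigma\lambda(a)_{\sigma\tau}$; for $X=[x_{\sigma\tau}]$ let $X^\ast=[x_{\tau\sigma}^\ast]$, let $A=\mathrm{diag}(a_\sigma)_{\sigma\in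 G}$, and $X^\#=A^{-1}X^\ast A$ (so $\lambda(d^\ast)=\lambda(d)^\#$). *)

theory Defs
  imports Main
begin

text \<open>Galois group: a finite group G of field automorphisms of K (K/F Galois with F the
fixed field of G, by Artin's theorem). We write k^sigma = sigma k, a right action, so
the group product sigma tau satisfies k^(sigma tau) = (k^sigma)^tau, i.e. it is the
function tau o sigma.\<close>

definition gmul :: "('k \<Rightarrow> 'k) \<Rightarrow> ('k \<Rightarrow> 'k) \<Rightarrow> ('k \<Rightarrow> 'k)" where
  "gmul \<sigma> \<tau> = \<tau> \<circ> \<sigma>"

definition field_aut :: "('k::field \<Rightarrow> 'k) \<Rightarrow> bool" where
  "field_aut \<sigma> \<longleftrightarrow> bij \<sigma> \<and> (\<forall>x y. \<sigma> (x + y) = \<sigma> x + \<sigma> y)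
      \<and> (\<forall>x y. \<sigma> (x * y) = \<sigma> x * \<sigma> y) \<and> \<sigma> 1 = 1"

definition finite_aut_group :: "('k::field \<Rightarrow> 'k) set \<Rightarrow> bool" where
  "finite_aut_group G \<longleftrightarrow> finite G \<and> (\<forall>\<sigma>\<in>G. field_aut \<sigma>) \<and> id \<in> G
      \<and> (\<forall>\<sigma>\<in>G. \<forall>\<tau>\<in>G. gmul \<sigma> \<tau> \<in> G) \<and> (\<forall>\<sigma>\<in>G. inv \<sigma> \<in> G)"

definition normalized_cocycle ::
  "('k::field \<Rightarrow> 'k) set \<Rightarrow> (('k \<Rightarrow> 'k) \<Rightarrow> ('k \<Rightarrow> 'k) \<Rightarrow> 'k) \<Rightarrow> bool" where
  "normalized_cocycle G \<Phi> \<longleftrightarrow>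
     (\<forall>\<sigma>\<in>G. \<forall>\<tau>\<in>G. \<Phi> \<sigma> \<tau> \<noteq> 0) \<and>
     (\<forall>\<sigma>\<in>G. \<Phi> id \<sigma> = 1 \<and> \<Phi> \<sigma> id = 1) \<and>
     (\<forall>\<sigma>\<in>G. \<forall>\<tau>\<in>G. \<forall>\<rho>\<in>G.
        \<Phi> (gmul \<sigma> \<tau>) \<rho> * \<rho> (\<Phi> \<sigma> \<tau>) = \<Phi> \<sigma> (gmul \<tau> \<rho>) * \<Phi> \<tau> \<rho>)"

text \<open>Crossed product D = (K/F, Phi): an element sum e_sigma c_sigma is represented by its
coefficient function sigma |-> c_sigma, vanishing outside G.\<close>

type_synonym 'k cp = "('k \<Rightarrow> 'k) \<Rightarrow> 'k"

definition cp_carrier :: "('k::field \<Rightarrow> 'k) set \<Rightarrow> 'k cp set" where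
  "cp_carrier G = {x. \<forall>\<sigma>. \<sigma> \<notin> G \<longrightarrow> x \<sigma> = 0}"

definition cp_add :: "'k::field cp \<Rightarrow> 'k cp \<Rightarrow> 'k cp" where
  "cp_add x y = (\<lambda>\<sigma>. x \<sigma> + y \<sigma>)"

definition cp_neg :: "'k::field cp \<Rightarrow> 'k cp" where
  "cp_neg x = (\<lambda>\<sigma>. - x \<sigma>)"

definition cp_zero :: "'k::field cp" where
  "cp_zero = (\<lambda>\<sigma>. 0)"

definition cp_emb :: "'k::field \<Rightarrow> 'k cp" where
  "cp_emb k = (\<lambda>\<sigma>. if \<sigma> = id then k else 0)"

definition cp_one :: "'k::field cp" where
  "cp_one = cp_emb 1"

definition cp_e :: "('k::field \<Rightarrow> 'k) \<Rightarrow> 'k cp" where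
  "cp_e \<sigma> = (\<lambda>\<rho>. if \<rho> = \<sigma> then 1 else 0)"

text \<open>(sum e_sigma c_sigma)(sum e_tau d_tau) = sum e_(sigma tau) Phi(sigma,tau) c_sigma^tau d_tau\<close>
definition cp_mult :: "('k::field \<Rightarrow> 'k) set \<Rightarrow> (('k \<Rightarrow> 'k) \<Rightarrow> ('k \<Rightarrow> 'k) \<Rightarrow> 'k)
     \<Rightarrow> 'k cp \<Rightarrow> 'k cp \<Rightarrow> 'k cp" where
  "cp_mult G \<Phi> x y = (\<lambda>\<rho>. \<Sum>\<sigma>\<in>G. \<Sum>\<tau>\<in>G.
       if gmul \<sigma> \<tau> = \<rho> then \<Phi> \<sigma> \<tau> * \<tau> (x \<sigma>) * y \<tau> else 0)"

definition cp_division_algebra :: "('k::field \<Rightarrow> 'k) set \<Rightarrow> (('k \<Rightarrow> 'k) \<Rightarrow> ('k \<Rightarrow> 'k) \<Rightarrow> 'k) \<Rightarrow> bool" where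
  "cp_division_algebra G \<Phi> \<longleftrightarrow>
     (\<forall>x\<in>cp_carrier G. x \<noteq> cp_zero \<longrightarrow>
        (\<exists>y\<in>cp_carrier G. cp_mult G \<Phi> x y = cp_one \<and> cp_mult G \<Phi> y x = cp_one))"

definition cp_involution :: "('k::field \<Rightarrow> 'k) set \<Rightarrow> (('k \<Rightarrow> 'k) \<Rightarrow> ('k \<Rightarrow> 'k) \<Rightarrow> 'k)
     \<Rightarrow> ('k cp \<Rightarrow> 'k cp) \<Rightarrow> bool" where
  "cp_involution G \<Phi> s \<longleftrightarrow>
     (\<forall>x\<in>cp_carrier G. s x \<in> cp_carrier G) \<and>
     (\<forall>x\<in>cp_carrier G. \<forall>y\<in>cp_carrier G. s (cp_add x y) = cp_add (s x) (s y)) \<and>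
     (\<forall>x\<in>cp_carrier G. \<forall>y\<in>cp_carrier G. s (cp_mult G \<Phi> x y) = cp_mult G \<Phi> (s y) (s x)) \<and>
     (\<forall>x\<in>cp_carrier G. s (s x) = x)"

text \<open>Restriction of the involution to K (meaningful when K^* is contained in K).\<close>
definition star_K :: "('k::field cp \<Rightarrow> 'k cp) \<Rightarrow> 'k \<Rightarrow> 'k" where
  "star_K s k = s (cp_emb k) id"

text \<open>a_sigma = e_sigma^* e_sigma, read as an element of K (its e_id-coefficient).\<close>
definition a_coef :: "('k::field \<Rightarrow> 'k) set \<Rightarrow> (('k \<Rightarrow> 'k) \<Rightarrow> ('k \<Rightarrow> 'k) \<Rightarrow> 'k)
     \<Rightarrow> ('k cp \<Rightarrow> 'k cp) \<Rightarrow> ('k \<Rightarrow> 'k) \<Rightarrow> 'k" where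
  "a_coef G \<Phi> s \<sigma> = cp_mult G \<Phi> (s (cp_e \<sigma>)) (cp_e \<sigma>) id"

definition unital_herm_cone :: "'a set \<Rightarrow> ('a \<Rightarrow> 'a \<Rightarrow> 'a) \<Rightarrow> ('a \<Rightarrow> 'a \<Rightarrow> 'a) \<Rightarrow> ('a \<Rightarrow> 'a)
     \<Rightarrow> 'a \<Rightarrow> 'a \<Rightarrow> ('a \<Rightarrow> 'a) \<Rightarrow> 'a set \<Rightarrow> bool" where
  "unital_herm_cone R add mult neg zero one s M \<longleftrightarrow>
     M \<subseteq> {r \<in> R. s r = r} \<and> one \<in> M \<and>
     (\<forall>x\<in>M. \<forall>y\<in>M. add x y \<in> M) \<and>
     (\<forall>a\<in>R. \<forall>x\<in>M. mult (mult a x) (s a) \<in> M) \<and>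
     M \<inter> neg ` M = {zero}"

abbreviation herm_cone_K :: "('k::field \<Rightarrow> 'k) \<Rightarrow> 'k set \<Rightarrow> bool" where
  "herm_cone_K s N \<equiv> unital_herm_cone UNIV (+) (*) uminus 0 1 s N"

abbreviation herm_cone_D :: "('k::field \<Rightarrow> 'k) set \<Rightarrow> (('k \<Rightarrow> 'k) \<Rightarrow> ('k \<Rightarrow> 'k) \<Rightarrow> 'k)
     \<Rightarrow> ('k cp \<Rightarrow> 'k cp) \<Rightarrow> 'k cp set \<Rightarrow> bool" where
  "herm_cone_D G \<Phi> s M \<equiv> unital_herm_cone (cp_carrier G) cp_add (cp_mult G \<Phi>) cp_neg cp_zero cp_one s M"

text \<open>Matrices in M_n(K), rows/columns indexed by G (n = card G).\<close>
type_synonym 'k gmat = "('k \<Rightarrow> 'k) \<Rightarrow> ('k \<Rightarrow> 'k) \<Rightarrow> 'k"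

definition mat_carrier :: "('k::field \<Rightarrow> 'k) set \<Rightarrow> 'k gmat set" where
  "mat_carrier G = {X. \<forall>\<sigma> \<tau>. \<sigma> \<notin> G \<or> \<tau> \<notin> G \<longrightarrow> X \<sigma> \<tau> = 0}"

definition mat_add :: "'k::field gmat \<Rightarrow> 'k gmat \<Rightarrow> 'k gmat" where
  "mat_add X Y = (\<lambda>\<sigma> \<tau>. X \<sigma> \<tau> + Y \<sigma> \<tau>)"

definition mat_neg :: "'k::field gmat \<Rightarrow> 'k gmat" where
  "mat_neg X = (\<lambda>\<sigma> \<tau>. - X \<sigma> \<tau>)"

definition mat_zero :: "'k::field gmat" where
  "mat_zero = (\<lambda>\<sigma> \<tau>. 0)"

definition mat_one :: "('k::field \<Rightarrow> 'k) set \<Rightarrow> 'k gmat" where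
  "mat_one G = (\<lambda>\<sigma> \<tau>. if \<sigma> \<in> G \<and> \<sigma> = \<tau> then 1 else 0)"

definition mat_mult :: "('k::field \<Rightarrow> 'k) set \<Rightarrow> 'k gmat \<Rightarrow> 'k gmat \<Rightarrow> 'k gmat" where
  "mat_mult G X Y = (\<lambda>\<sigma> \<rho>. \<Sum>\<tau>\<in>G. X \<sigma> \<tau> * Y \<tau> \<rho>)"

text \<open>X^# = A^-1 X^* A with A = diag(a_sigma) and X^* = [x_(tau sigma)^*].\<close>
definition mat_sharp :: "('k::field \<Rightarrow> 'k) set \<Rightarrow> (('k \<Rightarrow> 'k) \<Rightarrow> 'k) \<Rightarrow> ('k \<Rightarrow> 'k)
     \<Rightarrow> 'k gmat \<Rightarrow> 'k gmat" where
  "mat_sharp G a sK X = (\<lambda>\<sigma> \<tau>. if \<sigma> \<in> G \<and> \<tau> \<in> G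
       then inverse (a \<sigma>) * sK (X \<tau> \<sigma>) * a \<tau> else 0)"

text \<open>Left regular representation: a e_tau = sum_sigma e_sigma lambda(a)_(sigma tau).\<close>
definition lreg :: "('k::field \<Rightarrow> 'k) set \<Rightarrow> (('k \<Rightarrow> 'k) \<Rightarrow> ('k \<Rightarrow> 'k) \<Rightarrow> 'k)
     \<Rightarrow> 'k cp \<Rightarrow> 'k gmat" where
  "lreg G \<Phi> x = (\<lambda>\<sigma> \<tau>. if \<sigma> \<in> G \<and> \<tau> \<in> G then cp_mult G \<Phi> x (cp_e \<tau>) \<sigma> else 0)"

end

theory Submission
  imports Defs
begin

text \<open>
  The proof runs around the cycle (2) \<Rightarrow> (1) \<Rightarrow> (3) \<Rightarrow> (2).
  (2) \<Rightarrow> (1): conjugating n \<in> M \<inter> K by e_\<sigma> gives e_\<sigma>* n e_\<sigma> = a_\<sigma> n^\<sigma>.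
  (3) \<Rightarrow> (2): the left regular representation \<lambda> is an injective homomorphism of rings with
  involution (D, *) \<rightarrow> (M_n(K), #), and hermitian cones pull back along such maps.
  (1) \<Rightarrow> (3): with the hermitian form \<langle>v, w\<rangle> = \<Sum> v_\<sigma>* a_\<sigma> w_\<sigma>, for which # is the adjoint,
  L = {X = X^# | \<langle>v, X v\<rangle> \<in> N for all v} is a hermitian cone (pointedness by polarisation),
  and \<lambda>(k) = diag(k^\<sigma>) shows that \<lambda>^-1(L) \<inter> K = N exactly under (1).
\<close>

lemma field_aut_add: "field_aut \<sigma> \<Longrightarrow> \<sigma> (x + y) = \<sigma> x + \<sigma> y"
  and field_aut_mult: "field_aut \<sigma> \<Longrightarrow> \<sigma> (x * y) = \<sigma> x * \<sigma> y"
  and field_aut_one: "field_aut \<sigma> \<Longrightarrow> \<sigma> 1 = 1"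
  and field_aut_bij: "field_aut \<sigma> \<Longrightarrow> bij \<sigma>"
  unfolding field_aut_def by blast+

lemma field_aut_zero: "field_aut \<sigma> \<Longrightarrow> \<sigma> 0 = 0"
  using field_aut_add[of \<sigma> 0 0] add_cancel_right_right[of "\<sigma> 0" "\<sigma> 0"] by simp

lemma field_aut_neg: "field_aut \<sigma> \<Longrightarrow> \<sigma> (- x) = - \<sigma> x"
  by (metis field_aut_add field_aut_zero add.right_inverse add_eq_0_iff)

lemma field_aut_sum: "field_aut \<sigma> \<Longrightarrow> \<sigma> (sum f A) = (\<Sum>a\<in>A. \<sigma> (f a))"
  by (induction A rule: infinite_finite_induct) (auto simp: field_aut_zero field_aut_add)

lemma field_aut_eq_0_iff: "field_aut \<sigma> \<Longrightarrow> \<sigma> x = 0 \<longleftrightarrow> x = 0"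
  by (metis field_aut_bij field_aut_zero bij_def inj_eq)

text \<open>For a multiplicative map t of a field of characteristic 0 (below: the involution of K),
  the trace form (h, x) \<mapsto> h x + t(h x) is nondegenerate.  This is the polarisation step.\<close>
lemma trace_form_nondegenerate:
  fixes t :: "'k::field_char_0 \<Rightarrow> 'k"
  assumes t_mult: "\<And>x y. t (x * y) = t x * t y"
    and vanish: "\<And>x. h * x + t (h * x) = 0"
  shows "h = 0"
proof (cases "\<forall>x. t x = x")
  case True
  then show ?thesis using vanish[of 1] by simp
next
  case False
  then obtain x where x: "t x \<noteq> x" by blast
  have "t h = - h" using vanish[of 1] by (simp add: eq_neg_iff_add_eq_0 add.commute)
  then have "h * (x - t x) = 0" using vanish[of x] by (simp add: t_mult algebra_simps)
  then show ?thesis using x by simp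
qed

lemma unital_herm_cone_zero:
  "unital_herm_cone R add mult neg zero one s M \<Longrightarrow> zero \<in> M"
  unfolding unital_herm_cone_def by blast

lemma unital_herm_cone_preimage:
  assumes cone: "unital_herm_cone S add' mult' neg' zero' one' t L"
    and one_R: "one \<in> R" and zero_R: "zero \<in> R" and neg_zero: "neg zero = zero"
    and mult_R: "\<And>x y. x \<in> R \<Longrightarrow> y \<in> R \<Longrightarrow> mult x y \<in> R"
    and add_R: "\<And>x y. x \<in> R \<Longrightarrow> y \<in> R \<Longrightarrow> add x y \<in> R"
    and s_R: "\<And>x. x \<in> R \<Longrightarrow> s x \<in> R"
    and f_S: "\<And>x. x \<in> R \<Longrightarrow> f x \<in> S" and f_inj: "inj_on f R"
    and f_one: "f one = one'" and f_zero: "f zero = zero'"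
    and f_add: "\<And>x y. x \<in> R \<Longrightarrow> y \<in> R \<Longrightarrow> f (add x y) = add' (f x) (f y)"
    and f_mult: "\<And>x y. x \<in> R \<Longrightarrow> y \<in> R \<Longrightarrow> f (mult x y) = mult' (f x) (f y)"
    and f_neg: "\<And>x. x \<in> R \<Longrightarrow> f (neg x) = neg' (f x)"
    and f_s: "\<And>x. x \<in> R \<Longrightarrow> f (s x) = t (f x)"
  shows "unital_herm_cone R add mult neg zero one s {x \<in> R. f x \<in> L}"
proof -
  let ?M = "{x \<in> R. f x \<in> L}"
  have L_herm: "\<And>y. y \<in> L \<Longrightarrow> t y = y" and L_one: "one' \<in> L"
    and L_add: "\<And>x y. x \<in> L \<Longrightarrow> y \<in> L \<Longrightarrow> add' x y \<in> L"
    and L_conj: "\<And>b x. b \<in> S \<Longrightarrow> x \<in> L \<Longrightarrow> mult' (mult' b x) (t b) \<in> L"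
    and L_pointed: "L \<inter> neg' ` L = {zero'}"
    using cone unfolding unital_herm_cone_def by blast+
  have "s x = x" if "x \<in> ?M" for x
  proof -
    have "f (s x) = f x" using that f_s L_herm by simp
    then show ?thesis using that f_inj s_R by (auto dest: inj_onD)
  qed
  moreover have "mult (mult b x) (s b) \<in> ?M" if "b \<in> R" "x \<in> ?M" for b x
    using that by (simp add: mult_R s_R f_mult f_s f_S L_conj)
  moreover have "?M \<inter> neg ` ?M = {zero}"
  proof (intro equalityI subsetI)
    fix x assume x: "x \<in> ?M \<inter> neg ` ?M"
    then obtain y where y: "y \<in> ?M" "x = neg y" by blast
    then have "f x \<in> L \<inter> neg' ` L" using x by (simp add: f_neg)
    then have "f x = f zero" using L_pointed f_zero by blast
    then show "x \<in> {zero}" using f_inj x zero_R by (auto dest: inj_onD)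
  next
    have "zero \<in> ?M" using zero_R f_zero L_pointed by blast
    moreover from this have "zero \<in> neg ` ?M" using neg_zero by (metis image_eqI)
    ultimately show "x \<in> ?M \<inter> neg ` ?M" if "x \<in> {zero}" for x using that by blast
  qed
  ultimately show ?thesis
    unfolding unital_herm_cone_def using one_R f_one L_one add_R f_add L_add by auto
qed

lemma herm_cone_sum:
  fixes N :: "'a::comm_ring_1 set"
  assumes "unital_herm_cone UNIV (+) (*) uminus 0 1 t N" "\<forall>i\<in>I. f i \<in> N"
  shows "sum f I \<in> N"
proof (cases "finite I")
  case True
  then show ?thesis using assms(2)
  proof (induction I rule: finite_induct)
    case empty
    then show ?case using unital_herm_cone_zero[OF assms(1)] by simp
  next
    case (insert i I)
    then show ?case using assms(1) unfolding unital_herm_cone_def by auto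
  qed
qed (simp add: unital_herm_cone_zero[OF assms(1)])

definition cp_mono :: "('k::field \<Rightarrow> 'k) \<Rightarrow> 'k \<Rightarrow> 'k cp" where
  "cp_mono \<alpha> c = (\<lambda>\<rho>. if \<rho> = \<alpha> then c else 0)"

definition cp_sum :: "'i set \<Rightarrow> ('i \<Rightarrow> 'k::field cp) \<Rightarrow> 'k cp" where
  "cp_sum I f = (\<lambda>\<rho>. \<Sum>i\<in>I. f i \<rho>)"

lemma cp_emb_mono: "cp_emb k = cp_mono id k"
  by (simp add: cp_emb_def cp_mono_def fun_eq_iff)

lemma cp_e_mono: "cp_e \<sigma> = cp_mono \<sigma> 1"
  by (simp add: cp_e_def cp_mono_def fun_eq_iff)

lemma cp_mono_inj: "cp_mono \<alpha> c = cp_mono \<alpha> d \<Longrightarrow> c = d"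
  by (metis cp_mono_def)

lemma cp_neg_zero: "cp_neg cp_zero = cp_zero"
  by (simp add: cp_neg_def cp_zero_def)

lemma cp_emb_inj: "cp_emb k = cp_emb l \<Longrightarrow> k = l"
  by (metis cp_emb_def)

locale crossed_product =
  fixes G :: "('k::field \<Rightarrow> 'k) set"
    and \<Phi> :: "('k \<Rightarrow> 'k) \<Rightarrow> ('k \<Rightarrow> 'k) \<Rightarrow> 'k"
  assumes group: "finite_aut_group G"
    and cocycle: "normalized_cocycle G \<Phi>"
begin

abbreviation "mul \<equiv> cp_mult G \<Phi>"
abbreviation "C \<equiv> cp_carrier G"

lemma finite_G: "finite G"
  and id_G: "id \<in> G"
  and aut_G: "\<sigma> \<in> G \<Longrightarrow> field_aut \<sigma>"
  and gmul_G: "\<sigma> \<in> G \<Longrightarrow> \<tau> \<in> G \<Longrightarrow> gmul \<sigma> \<tau> \<in> G"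
  and inv_G: "\<sigma> \<in> G \<Longrightarrow> inv \<sigma> \<in> G"
  using group by (simp_all add: finite_aut_group_def)

lemma inv_apply: "\<sigma> \<in> G \<Longrightarrow> inv \<sigma> (\<sigma> x) = x"
  by (rule inv_f_f[OF bij_is_inj[OF field_aut_bij[OF aut_G]]])

lemma apply_inv: "\<sigma> \<in> G \<Longrightarrow> \<sigma> (inv \<sigma> x) = x"
  by (rule surj_f_inv_f[OF bij_is_surj[OF field_aut_bij[OF aut_G]]])

lemma inv_inv_G: "\<sigma> \<in> G \<Longrightarrow> inv (inv \<sigma>) = \<sigma>"
  by (rule inv_inv_eq[OF field_aut_bij[OF aut_G]])

lemma gmul_id [simp]: "gmul id \<sigma> = \<sigma>" "gmul \<sigma> id = \<sigma>"
  by (simp_all add: gmul_def)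

lemma gmul_assoc: "gmul (gmul \<alpha> \<beta>) \<gamma> = gmul \<alpha> (gmul \<beta> \<gamma>)"
  by (simp add: gmul_def comp_assoc)

lemma gmul_inv: "\<sigma> \<in> G \<Longrightarrow> gmul \<sigma> (inv \<sigma>) = id"
  by (simp add: gmul_def fun_eq_iff inv_apply)

lemma gmul_eq_id_iff: "\<sigma> \<in> G \<Longrightarrow> gmul \<sigma> \<tau> = id \<longleftrightarrow> \<tau> = inv \<sigma>"
proof -
  assume "\<sigma> \<in> G"
  then have "inv \<sigma> \<circ> \<sigma> = id" "\<sigma> \<circ> inv \<sigma> = id"
    by (simp_all add: fun_eq_iff inv_apply apply_inv)
  then show ?thesis unfolding gmul_def by (metis comp_assoc comp_id)
qed

lemma \<Phi>_nonzero: "\<sigma> \<in> G \<Longrightarrow> \<tau> \<in> G \<Longrightarrow> \<Phi> \<sigma> \<tau> \<noteq> 0"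
  and \<Phi>_id [simp]: "\<sigma> \<in> G \<Longrightarrow> \<Phi> id \<sigma> = 1" "\<sigma> \<in> G \<Longrightarrow> \<Phi> \<sigma> id = 1"
  and \<Phi>_cocycle: "\<sigma> \<in> G \<Longrightarrow> \<tau> \<in> G \<Longrightarrow> \<rho> \<in> G \<Longrightarrow>
     \<Phi> (gmul \<sigma> \<tau>) \<rho> * \<rho> (\<Phi> \<sigma> \<tau>) = \<Phi> \<sigma> (gmul \<tau> \<rho>) * \<Phi> \<tau> \<rho>"
  using cocycle by (simp_all add: normalized_cocycle_def)

lemma mul_C: "mul x y \<in> C"
  unfolding cp_carrier_def cp_mult_def using gmul_G by (auto intro!: sum.neutral)

lemma mono_C: "\<alpha> \<in> G \<Longrightarrow> cp_mono \<alpha> c \<in> C"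
  and emb_C: "cp_emb k \<in> C"
  and e_C: "\<alpha> \<in> G \<Longrightarrow> cp_e \<alpha> \<in> C"
  and one_C: "cp_one \<in> C"
  and zero_C: "cp_zero \<in> C"
  and add_C: "x \<in> C \<Longrightarrow> y \<in> C \<Longrightarrow> cp_add x y \<in> C"
  and sum_C: "\<forall>i\<in>I. f i \<in> C \<Longrightarrow> cp_sum I f \<in> C"
  by (auto simp: cp_carrier_def cp_mono_def cp_emb_def cp_e_def cp_one_def cp_zero_def
      cp_add_def cp_sum_def id_G intro!: sum.neutral)

lemma cp_sum_cong: "(\<And>i. i \<in> I \<Longrightarrow> f i = g i) \<Longrightarrow> cp_sum I f = cp_sum I g"
  by (simp add: cp_sum_def)

lemma monomial_expansion:
  assumes "x \<in> C" shows "x = cp_sum G (\<lambda>\<sigma>. cp_mono \<sigma> (x \<sigma>))"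
proof
  fix \<rho>
  have "cp_sum G (\<lambda>\<sigma>. cp_mono \<sigma> (x \<sigma>)) \<rho> = (\<Sum>\<sigma>\<in>G. if \<rho> = \<sigma> then x \<sigma> else 0)"
    unfolding cp_sum_def cp_mono_def by (intro sum.cong) auto
  then show "x \<rho> = cp_sum G (\<lambda>\<sigma>. cp_mono \<sigma> (x \<sigma>)) \<rho>"
    using assms finite_G by (auto simp: cp_carrier_def)
qed

lemma mul_mono_mono:
  assumes "\<alpha> \<in> G" "\<beta> \<in> G"
  shows "mul (cp_mono \<alpha> c) (cp_mono \<beta> d) = cp_mono (gmul \<alpha> \<beta>) (\<Phi> \<alpha> \<beta> * \<beta> c * d)"
proof
  fix \<rho>
  have "mul (cp_mono \<alpha> c) (cp_mono \<beta> d) \<rho>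
      = (\<Sum>\<sigma>\<in>G. if \<sigma> = \<alpha> then \<Sum>\<tau>\<in>G. if \<tau> = \<beta> then cp_mono (gmul \<alpha> \<beta>) (\<Phi> \<alpha> \<beta> * \<beta> c * d) \<rho> else 0 else 0)"
    unfolding cp_mult_def cp_mono_def
    by (intro sum.cong refl) (auto simp: field_aut_zero aut_G intro: sum.neutral sum.cong)
  also have "\<dots> = cp_mono (gmul \<alpha> \<beta>) (\<Phi> \<alpha> \<beta> * \<beta> c * d) \<rho>"
    using assms finite_G by simp
  finally show "mul (cp_mono \<alpha> c) (cp_mono \<beta> d) \<rho> = cp_mono (gmul \<alpha> \<beta>) (\<Phi> \<alpha> \<beta> * \<beta> c * d) \<rho>" .
qed

lemma mul_sum_left:
  assumes "finite I" shows "mul (cp_sum I f) y = cp_sum I (\<lambda>i. mul (f i) y)"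
proof
  fix \<rho>
  have "mul (cp_sum I f) y \<rho>
      = (\<Sum>\<sigma>\<in>G. \<Sum>\<tau>\<in>G. \<Sum>i\<in>I. if gmul \<sigma> \<tau> = \<rho> then \<Phi> \<sigma> \<tau> * \<tau> (f i \<sigma>) * y \<tau> else 0)"
    unfolding cp_mult_def cp_sum_def
    by (intro sum.cong refl) (simp add: aut_G field_aut_sum sum_distrib_left sum_distrib_right)
  also have "\<dots> = cp_sum I (\<lambda>i. mul (f i) y) \<rho>"
    unfolding cp_mult_def cp_sum_def by (simp add: sum.swap[where A = I])
  finally show "mul (cp_sum I f) y \<rho> = cp_sum I (\<lambda>i. mul (f i) y) \<rho>" .
qed

lemma mul_sum_right:
  assumes "finite I" shows "mul x (cp_sum I f) = cp_sum I (\<lambda>i. mul x (f i))"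
proof
  fix \<rho>
  have "mul x (cp_sum I f) \<rho>
      = (\<Sum>\<sigma>\<in>G. \<Sum>\<tau>\<in>G. \<Sum>i\<in>I. if gmul \<sigma> \<tau> = \<rho> then \<Phi> \<sigma> \<tau> * \<tau> (x \<sigma>) * f i \<tau> else 0)"
    unfolding cp_mult_def cp_sum_def
    by (intro sum.cong refl) (simp add: sum_distrib_left)
  also have "\<dots> = cp_sum I (\<lambda>i. mul x (f i)) \<rho>"
    unfolding cp_mult_def cp_sum_def by (simp add: sum.swap[where A = I])
  finally show "mul x (cp_sum I f) \<rho> = cp_sum I (\<lambda>i. mul x (f i)) \<rho>" .
qed

text \<open>On monomials, associativity is exactly the cocycle identity.\<close>
lemma mono_assoc:
  assumes "\<alpha> \<in> G" "\<beta> \<in> G" "\<gamma> \<in> G"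
  shows "mul (mul (cp_mono \<alpha> c) (cp_mono \<beta> d)) (cp_mono \<gamma> e)
       = mul (cp_mono \<alpha> c) (mul (cp_mono \<beta> d) (cp_mono \<gamma> e))"
proof -
  have "\<Phi> (gmul \<alpha> \<beta>) \<gamma> * \<gamma> (\<Phi> \<alpha> \<beta> * \<beta> c * d) * e
      = (\<Phi> (gmul \<alpha> \<beta>) \<gamma> * \<gamma> (\<Phi> \<alpha> \<beta>)) * \<gamma> (\<beta> c) * \<gamma> d * e"
    using assms by (simp add: aut_G field_aut_mult mult.assoc)
  also have "\<dots> = (\<Phi> \<alpha> (gmul \<beta> \<gamma>) * \<Phi> \<beta> \<gamma>) * \<gamma> (\<beta> c) * \<gamma> d * e"
    using assms by (simp add: \<Phi>_cocycle)
  also have "\<dots> = \<Phi> \<alpha> (gmul \<beta> \<gamma>) * gmul \<beta> \<gamma> c * (\<Phi> \<beta> \<gamma> * \<gamma> d * e)"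
    by (simp add: gmul_def mult_ac)
  finally have coefficients:
    "\<Phi> (gmul \<alpha> \<beta>) \<gamma> * \<gamma> (\<Phi> \<alpha> \<beta> * \<beta> c * d) * e
       = \<Phi> \<alpha> (gmul \<beta> \<gamma>) * gmul \<beta> \<gamma> c * (\<Phi> \<beta> \<gamma> * \<gamma> d * e)" .
  show ?thesis
    using assms by (simp only: mul_mono_mono gmul_G gmul_assoc coefficients)
qed

text \<open>Associativity of D, reduced to monomials by additivity.\<close>
lemma mul_assoc:
  assumes "x \<in> C" "y \<in> C" "z \<in> C"
  shows "mul (mul x y) z = mul x (mul y z)"
proof -
  define X Y Z where "X = (\<lambda>\<sigma>. cp_mono \<sigma> (x \<sigma>))" and "Y = (\<lambda>\<sigma>. cp_mono \<sigma> (y \<sigma>))"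
    and "Z = (\<lambda>\<sigma>. cp_mono \<sigma> (z \<sigma>))"
  have expansions: "x = cp_sum G X" "y = cp_sum G Y" "z = cp_sum G Z"
    using assms monomial_expansion unfolding X_def Y_def Z_def by blast+
  have "mul (mul (cp_sum G X) (cp_sum G Y)) (cp_sum G Z)
      = cp_sum G (\<lambda>\<gamma>. cp_sum G (\<lambda>\<beta>. cp_sum G (\<lambda>\<alpha>. mul (mul (X \<alpha>) (Y \<beta>)) (Z \<gamma>))))"
    by (simp add: mul_sum_left mul_sum_right finite_G)
  also have "\<dots> = cp_sum G (\<lambda>\<gamma>. cp_sum G (\<lambda>\<beta>. cp_sum G (\<lambda>\<alpha>. mul (X \<alpha>) (mul (Y \<beta>) (Z \<gamma>)))))"
    unfolding cp_sum_def X_def Y_def Z_def by (simp add: mono_assoc cong: sum.cong)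
  also have "\<dots> = mul (cp_sum G X) (mul (cp_sum G Y) (cp_sum G Z))"
    by (simp add: mul_sum_left mul_sum_right finite_G)
  finally show ?thesis by (simp only: expansions[symmetric])
qed

lemma mul_emb_left:
  assumes "y \<in> C" shows "mul (cp_emb k) y = cp_sum G (\<lambda>\<tau>. cp_mono \<tau> (\<tau> k * y \<tau>))"
proof -
  have "mul (cp_mono id k) (cp_sum G (\<lambda>\<tau>. cp_mono \<tau> (y \<tau>))) = cp_sum G (\<lambda>\<tau>. cp_mono \<tau> (\<tau> k * y \<tau>))"
    by (simp add: mul_sum_right finite_G mul_mono_mono id_G cong: cp_sum_cong)
  then show ?thesis using monomial_expansion[OF assms] by (simp add: cp_emb_mono)
qed

lemma mul_emb_right:
  assumes "y \<in> C" shows "mul y (cp_emb k) = cp_sum G (\<lambda>\<sigma>. cp_mono \<sigma> (y \<sigma> * k))"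
proof -
  have "mul (cp_sum G (\<lambda>\<sigma>. cp_mono \<sigma> (y \<sigma>))) (cp_mono id k) = cp_sum G (\<lambda>\<sigma>. cp_mono \<sigma> (y \<sigma> * k))"
    by (simp add: mul_sum_left finite_G mul_mono_mono id_G cong: cp_sum_cong)
  then show ?thesis using monomial_expansion[OF assms] by (simp add: cp_emb_mono)
qed

lemma mul_one_left: "y \<in> C \<Longrightarrow> mul cp_one y = y"
  and mul_one_right: "y \<in> C \<Longrightarrow> mul y cp_one = y"
  using monomial_expansion
  by (simp_all add: cp_one_def mul_emb_left mul_emb_right aut_G field_aut_one cong: cp_sum_cong)

lemma e_id: "cp_e id = cp_one"
  by (simp add: cp_e_def cp_one_def cp_emb_def fun_eq_iff)

lemma mul_emb_emb: "mul (cp_emb k) (cp_emb l) = cp_emb (k * l)"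
  by (simp add: cp_emb_mono mul_mono_mono id_G)

lemma mul_mono_right: "mul x (cp_mono \<tau> d) \<rho> = mul x (cp_e \<tau>) \<rho> * d"
  unfolding cp_mult_def cp_mono_def cp_e_def sum_distrib_right by (intro sum.cong refl) auto

lemma mul_add_left: "mul (cp_add x y) z = cp_add (mul x z) (mul y z)"
  unfolding cp_mult_def cp_add_def
  by (auto simp: fun_eq_iff sum.distrib[symmetric] field_aut_add aut_G algebra_simps intro!: sum.cong)

lemma mul_neg_left: "mul (cp_neg x) z = cp_neg (mul x z)"
  unfolding cp_mult_def cp_neg_def
  by (auto simp: fun_eq_iff sum_negf[symmetric] field_aut_neg aut_G intro!: sum.cong)

lemma mul_zero_left: "mul cp_zero z = cp_zero"
  unfolding cp_mult_def cp_zero_def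
  by (auto simp: fun_eq_iff field_aut_zero aut_G intro!: sum.neutral)

end

text \<open>Characteristic 0 is only used for polarisation.\<close>
locale crossed_product_involution = crossed_product G \<Phi>
  for G :: "('k::field_char_0 \<Rightarrow> 'k) set" and \<Phi> +
  fixes s :: "'k cp \<Rightarrow> 'k cp"
  assumes involution: "cp_involution G \<Phi> s"
    and K_invariant: "\<forall>k. \<exists>k'. s (cp_emb k) = cp_emb k'"
    and a_in_K: "\<forall>\<sigma>\<in>G. \<exists>k. mul (s (cp_e \<sigma>)) (cp_e \<sigma>) = cp_emb k"
begin

abbreviation "sK \<equiv> star_K s"
abbreviation "a \<equiv> a_coef G \<Phi> s"

lemma s_C: "x \<in> C \<Longrightarrow> s x \<in> C"
  and s_add: "x \<in> C \<Longrightarrow> y \<in> C \<Longrightarrow> s (cp_add x y) = cp_add (s x) (s y)"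
  and s_mul: "x \<in> C \<Longrightarrow> y \<in> C \<Longrightarrow> s (mul x y) = mul (s y) (s x)"
  and s_s: "x \<in> C \<Longrightarrow> s (s x) = x"
  using involution by (simp_all add: cp_involution_def)

lemma s_zero: "s cp_zero = cp_zero"
proof -
  have "s cp_zero = s (cp_add cp_zero cp_zero)" by (simp add: cp_add_def cp_zero_def)
  also have "\<dots> = cp_add (s cp_zero) (s cp_zero)" by (simp add: s_add zero_C)
  finally show ?thesis by (simp add: cp_add_def cp_zero_def fun_eq_iff)
qed

lemma s_one: "s cp_one = cp_one"
proof -
  have "s cp_one = mul (s cp_one) (s (s cp_one))" by (simp add: mul_one_right s_C one_C s_s)
  also have "\<dots> = s (mul (s cp_one) cp_one)" by (simp add: s_mul s_C one_C)
  finally show ?thesis by (simp add: mul_one_right s_C one_C s_s)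
qed

lemma s_sum: "finite I \<Longrightarrow> \<forall>i\<in>I. f i \<in> C \<Longrightarrow> s (cp_sum I f) = cp_sum I (\<lambda>i. s (f i))"
proof (induction I rule: finite_induct)
  case empty
  then show ?case by (simp add: cp_sum_def s_zero flip: cp_zero_def)
next
  case (insert i I)
  have split: "cp_sum (insert i I) g = cp_add (g i) (cp_sum I g)" for g :: "'a \<Rightarrow> 'k cp"
    using insert by (simp add: cp_sum_def cp_add_def)
  have "s (cp_sum (insert i I) f) = cp_add (s (f i)) (s (cp_sum I f))"
    using insert.prems by (simp add: split s_add sum_C)
  then show ?case using insert by (simp add: split)
qed

lemma s_emb: "s (cp_emb k) = cp_emb (sK k)"
  using K_invariant unfolding star_K_def by (metis cp_emb_def)

lemma emb_add: "cp_add (cp_emb k) (cp_emb l) = cp_emb (k + l)"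
  by (auto simp: cp_add_def cp_emb_def)

lemma sK_add: "sK (k + l) = sK k + sK l"
proof -
  have "cp_emb (sK (k + l)) = cp_emb (sK k + sK l)"
    by (simp flip: s_emb emb_add add: s_add emb_C)
  then show ?thesis by (rule cp_emb_inj)
qed

lemma sK_mul: "sK (k * l) = sK k * sK l"
proof -
  have "cp_emb (sK (k * l)) = cp_emb (sK l * sK k)"
    by (simp flip: s_emb mul_emb_emb add: s_mul emb_C)
  then show ?thesis by (simp add: cp_emb_inj mult.commute)
qed

lemma sK_one: "sK 1 = 1"
  using s_one unfolding cp_one_def s_emb by (rule cp_emb_inj)

lemma sK_sK: "sK (sK k) = k"
  using s_s[OF emb_C] unfolding s_emb by (rule cp_emb_inj)

lemma sK_zero: "sK 0 = 0"
  using sK_add[of 0 0] by simp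

lemma sK_inverse: "sK (inverse k) = inverse (sK k)"
proof (cases "k = 0")
  case False
  then have "sK k * sK (inverse k) = 1" by (simp flip: sK_mul add: sK_one)
  then show ?thesis by (rule inverse_unique[symmetric])
qed (simp add: sK_zero)

lemma sK_sum: "sK (sum f A) = (\<Sum>x\<in>A. sK (f x))"
  by (induction A rule: infinite_finite_induct) (auto simp: sK_zero sK_add)

lemma mul_mono_left_id:
  assumes "\<alpha> \<in> G" "y \<in> C"
  shows "mul (cp_mono \<alpha> c) y id = \<Phi> \<alpha> (inv \<alpha>) * inv \<alpha> c * y (inv \<alpha>)"
proof -
  have "mul (cp_mono \<alpha> c) y = mul (cp_mono \<alpha> c) (cp_sum G (\<lambda>\<tau>. cp_mono \<tau> (y \<tau>)))"
    using monomial_expansion[OF assms(2)] by (rule arg_cong)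
  also have "\<dots> = cp_sum G (\<lambda>\<tau>. cp_mono (gmul \<alpha> \<tau>) (\<Phi> \<alpha> \<tau> * \<tau> c * y \<tau>))"
    by (simp add: mul_sum_right finite_G mul_mono_mono assms(1) cong: cp_sum_cong)
  finally have expansion: "mul (cp_mono \<alpha> c) y = \<dots>" .
  have "mul (cp_mono \<alpha> c) y id = (\<Sum>\<tau>\<in>G. if id = gmul \<alpha> \<tau> then \<Phi> \<alpha> \<tau> * \<tau> c * y \<tau> else 0)"
    by (subst expansion) (simp add: cp_sum_def cp_mono_def)
  also have "\<dots> = (\<Sum>\<tau>\<in>G. if \<tau> = inv \<alpha> then \<Phi> \<alpha> \<tau> * \<tau> c * y \<tau> else 0)"
    using gmul_eq_id_iff[OF assms(1)] by (intro sum.cong refl) (metis (full_types))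
  also have "\<dots> = \<Phi> \<alpha> (inv \<alpha>) * inv \<alpha> c * y (inv \<alpha>)"
    using finite_G inv_G[OF assms(1)] by simp
  finally show ?thesis .
qed

lemma a_emb: "\<sigma> \<in> G \<Longrightarrow> mul (s (cp_e \<sigma>)) (cp_e \<sigma>) = cp_emb (a \<sigma>)"
  using a_in_K unfolding a_coef_def by (metis cp_emb_def)

lemma a_herm: assumes "\<sigma> \<in> G" shows "sK (a \<sigma>) = a \<sigma>"
proof -
  have "cp_emb (sK (a \<sigma>)) = s (mul (s (cp_e \<sigma>)) (cp_e \<sigma>))" by (simp add: a_emb assms s_emb)
  also have "\<dots> = mul (s (cp_e \<sigma>)) (cp_e \<sigma>)" by (simp add: s_mul s_C e_C assms s_s)
  also have "\<dots> = cp_emb (a \<sigma>)" by (rule a_emb[OF assms])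
  finally show ?thesis by (rule cp_emb_inj)
qed

lemma a_id: "a id = 1"
proof -
  have "a id = mul (s cp_one) cp_one id" by (simp only: a_coef_def e_id)
  also have "\<dots> = cp_one id" by (simp only: s_one mul_one_left[OF one_C])
  finally show ?thesis by (simp add: cp_one_def cp_emb_def)
qed

text \<open>Since a_\<sigma> \<in> K, the involution maps e_\<sigma> to a monomial e_{\<sigma>^-1} c_\<sigma>.\<close>
definition conj_coeff :: "('k \<Rightarrow> 'k) \<Rightarrow> 'k" where
  "conj_coeff \<sigma> = inv \<sigma> (a \<sigma>) * inverse (\<Phi> \<sigma> (inv \<sigma>))"

lemma s_e: assumes "\<sigma> \<in> G" shows "s (cp_e \<sigma>) = cp_mono (inv \<sigma>) (conj_coeff \<sigma>)"
proof -
  have inv: "inv \<sigma> \<in> G" by (rule inv_G[OF assms])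
  have "mul (cp_e \<sigma>) (cp_e (inv \<sigma>)) = cp_emb (\<Phi> \<sigma> (inv \<sigma>))"
    by (simp add: cp_e_mono cp_emb_mono mul_mono_mono assms inv gmul_inv field_aut_one aut_G)
  then have one: "cp_one = mul (mul (cp_e \<sigma>) (cp_e (inv \<sigma>))) (cp_emb (inverse (\<Phi> \<sigma> (inv \<sigma>))))"
    by (simp add: mul_emb_emb \<Phi>_nonzero assms inv cp_one_def)
  have "s (cp_e \<sigma>) = mul (s (cp_e \<sigma>)) cp_one" by (simp add: mul_one_right s_C e_C assms)
  also have "\<dots> = mul (cp_emb (a \<sigma>)) (mul (cp_e (inv \<sigma>)) (cp_emb (inverse (\<Phi> \<sigma> (inv \<sigma>)))))"
    unfolding one by (simp add: mul_assoc s_C e_C emb_C mul_C assms inv flip: a_emb)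
  also have "\<dots> = cp_mono (inv \<sigma>) (conj_coeff \<sigma>)"
    by (simp add: assms inv cp_e_mono cp_emb_mono mul_mono_mono id_G conj_coeff_def field_aut_one aut_G)
  finally show ?thesis .
qed

lemma a_nonzero: assumes "\<sigma> \<in> G" shows "a \<sigma> \<noteq> 0"
proof
  assume "a \<sigma> = 0"
  then have "s (cp_e \<sigma>) = cp_zero"
    by (simp add: s_e assms conj_coeff_def field_aut_zero aut_G inv_G cp_mono_def cp_zero_def)
  then have "cp_e \<sigma> = cp_zero" by (metis s_s e_C assms s_zero)
  then show False by (metis cp_e_def cp_zero_def zero_neq_one)
qed

lemma conj_coeff_nonzero: "\<sigma> \<in> G \<Longrightarrow> conj_coeff \<sigma> \<noteq> 0"
  by (simp add: conj_coeff_def a_nonzero \<Phi>_nonzero inv_G field_aut_eq_0_iff aut_G)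

lemma mul_s_e_id:
  assumes "\<sigma> \<in> G" "y \<in> C" shows "mul (s (cp_e \<sigma>)) y id = a \<sigma> * y \<sigma>"
proof -
  have formula: "mul (s (cp_e \<sigma>)) z id = \<Phi> (inv \<sigma>) \<sigma> * \<sigma> (conj_coeff \<sigma>) * z \<sigma>" if "z \<in> C" for z
    using assms that by (simp add: s_e mul_mono_left_id inv_G inv_inv_G)
  have "a \<sigma> = \<Phi> (inv \<sigma>) \<sigma> * \<sigma> (conj_coeff \<sigma>)"
    using formula[OF e_C[OF assms(1)]] by (simp add: a_coef_def cp_e_def)
  then show ?thesis using formula[OF assms(2)] by simp
qed

lemma s_mono:
  assumes "\<rho> \<in> G"
  shows "s (cp_mono \<rho> d) = cp_mono (inv \<rho>) (inv \<rho> (sK d) * conj_coeff \<rho>)"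
proof -
  have "cp_mono \<rho> d = mul (cp_e \<rho>) (cp_emb d)"
    by (simp add: cp_e_mono cp_emb_mono mul_mono_mono assms id_G)
  then have "s (cp_mono \<rho> d) = mul (cp_emb (sK d)) (cp_mono (inv \<rho>) (conj_coeff \<rho>))"
    by (simp add: s_mul e_C emb_C assms s_emb s_e)
  then show ?thesis by (simp add: cp_emb_mono mul_mono_mono id_G inv_G assms)
qed

lemma s_coeff_id:
  assumes "z \<in> C" shows "s z id = sK (z id)"
proof -
  have inv_is_id: "id = inv \<rho> \<longleftrightarrow> \<rho> = id" if "\<rho> \<in> G" for \<rho>
    using that inv_inv_G by (metis inv_id)
  have conj_coeff_id: "conj_coeff id = 1"
    by (simp add: conj_coeff_def a_id id_G)
  have "s z = s (cp_sum G (\<lambda>\<rho>. cp_mono \<rho> (z \<rho>)))"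
    using monomial_expansion[OF assms] by (rule arg_cong)
  also have "\<dots> = cp_sum G (\<lambda>\<rho>. cp_mono (inv \<rho>) (inv \<rho> (sK (z \<rho>)) * conj_coeff \<rho>))"
    by (simp add: s_sum finite_G mono_C s_mono cong: cp_sum_cong)
  finally have "s z id = (\<Sum>\<rho>\<in>G. if id = inv \<rho> then inv \<rho> (sK (z \<rho>)) * conj_coeff \<rho> else 0)"
    by (simp add: cp_sum_def cp_mono_def)
  also have "\<dots> = (\<Sum>\<rho>\<in>G. if \<rho> = id then sK (z id) else 0)"
    by (intro sum.cong refl) (simp add: inv_is_id conj_coeff_id)
  finally show ?thesis using finite_G id_G by simp
qed

lemma sK_commute: assumes "\<sigma> \<in> G" shows "sK (\<sigma> k) = \<sigma> (sK k)"
proof -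
  have inv: "inv \<sigma> \<in> G" by (rule inv_G[OF assms])
  have "mul (cp_emb k) (cp_e \<sigma>) = mul (cp_e \<sigma>) (cp_emb (\<sigma> k))"
    by (simp add: cp_emb_mono cp_e_mono mul_mono_mono assms id_G)
  then have "s (mul (cp_emb k) (cp_e \<sigma>)) = s (mul (cp_e \<sigma>) (cp_emb (\<sigma> k)))" by simp
  then have "mul (cp_mono (inv \<sigma>) (conj_coeff \<sigma>)) (cp_emb (sK k))
      = mul (cp_emb (sK (\<sigma> k))) (cp_mono (inv \<sigma>) (conj_coeff \<sigma>))"
    by (simp add: s_mul emb_C e_C assms s_emb s_e)
  then have "cp_mono (inv \<sigma>) (conj_coeff \<sigma> * sK k) = cp_mono (inv \<sigma>) (inv \<sigma> (sK (\<sigma> k)) * conj_coeff \<sigma>)"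
    by (simp add: cp_emb_mono mul_mono_mono inv id_G)
  then have "conj_coeff \<sigma> * sK k = conj_coeff \<sigma> * inv \<sigma> (sK (\<sigma> k))"
    by (simp add: cp_mono_inj mult.commute)
  then have "sK k = inv \<sigma> (sK (\<sigma> k))" using conj_coeff_nonzero[OF assms] by simp
  then show ?thesis by (simp add: apply_inv assms)
qed

lemma regular_entry_s:
  assumes x: "x \<in> C" and st: "\<sigma> \<in> G" "\<tau> \<in> G"
  shows "mul (s x) (cp_e \<tau>) \<sigma> = inverse (a \<sigma>) * sK (mul x (cp_e \<sigma>) \<tau>) * a \<tau>"
proof -
  let ?w = "mul x (cp_e \<sigma>)"
  have "a \<sigma> * mul (s x) (cp_e \<tau>) \<sigma> = mul (s (cp_e \<sigma>)) (mul (s x) (cp_e \<tau>)) id"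
    by (simp add: mul_s_e_id st mul_C)
  also have "\<dots> = mul (s ?w) (s (s (cp_e \<tau>))) id"
    by (simp add: mul_assoc[symmetric] s_mul s_s x e_C s_C st)
  also have "\<dots> = s (mul (s (cp_e \<tau>)) ?w) id" by (simp add: s_mul s_C e_C st mul_C)
  also have "\<dots> = sK (a \<tau> * ?w \<tau>)" by (simp add: s_coeff_id mul_C mul_s_e_id st)
  also have "\<dots> = a \<tau> * sK (?w \<tau>)" by (simp add: sK_mul a_herm st)
  finally have "a \<sigma> * mul (s x) (cp_e \<tau>) \<sigma> = a \<tau> * sK (?w \<tau>)" .
  then show ?thesis using a_nonzero[OF st(1)] by (simp add: field_simps)
qed

abbreviation "lr \<equiv> lreg G \<Phi>"
abbreviation "sh \<equiv> mat_sharp G a sK"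
abbreviation "MC \<equiv> mat_carrier G"
abbreviation "mm \<equiv> mat_mult G"

lemma lr_C: "lr x \<in> MC"
  by (simp add: lreg_def mat_carrier_def)

text \<open>The coefficients of x form the e_id-column of \<lambda>(x), so \<lambda> is injective.\<close>
lemma lr_column_id: "x \<in> C \<Longrightarrow> \<sigma> \<in> G \<Longrightarrow> lr x \<sigma> id = x \<sigma>"
  by (simp add: lreg_def id_G e_id mul_one_right)

lemma lr_inj: "inj_on lr C"
proof
  fix x y assume xy: "x \<in> C" "y \<in> C" "lr x = lr y"
  show "x = y"
  proof
    fix \<sigma> show "x \<sigma> = y \<sigma>"
      using xy lr_column_id[of x \<sigma>] lr_column_id[of y \<sigma>] by (cases "\<sigma> \<in> G") (auto simp: cp_carrier_def)
  qed
qed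

lemma lr_add: "lr (cp_add x y) = mat_add (lr x) (lr y)"
  by (simp add: lreg_def mat_add_def mul_add_left fun_eq_iff) (simp add: cp_add_def)

lemma lr_neg: "lr (cp_neg x) = mat_neg (lr x)"
  by (simp add: lreg_def mat_neg_def mul_neg_left fun_eq_iff) (simp add: cp_neg_def)

lemma lr_zero: "lr cp_zero = mat_zero"
  by (simp add: lreg_def mat_zero_def mul_zero_left fun_eq_iff) (simp add: cp_zero_def)

lemma lr_one: "lr cp_one = mat_one G"
proof (intro ext)
  fix \<sigma> \<tau> show "lr cp_one \<sigma> \<tau> = mat_one G \<sigma> \<tau>"
    by (auto simp: lreg_def mat_one_def mul_one_left e_C) (auto simp: cp_e_def)
qed

lemma mul_coeff_regular:
  assumes "w \<in> C" shows "mul x w \<sigma> = (\<Sum>\<tau>\<in>G. mul x (cp_e \<tau>) \<sigma> * w \<tau>)"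
proof -
  have "mul x w = mul x (cp_sum G (\<lambda>\<tau>. cp_mono \<tau> (w \<tau>)))"
    using monomial_expansion[OF assms] by (rule arg_cong)
  also have "\<dots> = cp_sum G (\<lambda>\<tau>. mul x (cp_mono \<tau> (w \<tau>)))"
    by (rule mul_sum_right[OF finite_G])
  finally show ?thesis by (simp add: cp_sum_def mul_mono_right)
qed

lemma lr_mul: assumes "x \<in> C" "y \<in> C" shows "lr (mul x y) = mm (lr x) (lr y)"
proof (intro ext)
  fix \<sigma> \<rho>
  show "lr (mul x y) \<sigma> \<rho> = mm (lr x) (lr y) \<sigma> \<rho>"
  proof (cases "\<sigma> \<in> G \<and> \<rho> \<in> G")
    case True
    then show ?thesis unfolding lreg_def mat_mult_def
      by (simp add: mul_assoc assms e_C mul_coeff_regular[of "mul y (cp_e \<rho>)"] mul_C cong: sum.cong)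
  next
    case False
    then show ?thesis unfolding lreg_def mat_mult_def by (auto intro!: sum.neutral)
  qed
qed

lemma lr_s: "x \<in> C \<Longrightarrow> lr (s x) = sh (lr x)"
  by (auto simp: lreg_def mat_sharp_def regular_entry_s fun_eq_iff)

lemma mm_MC: "A \<in> MC \<Longrightarrow> B \<in> MC \<Longrightarrow> mm A B \<in> MC"
  by (auto simp: mat_carrier_def mat_mult_def intro!: sum.neutral)

lemma sh_MC: "sh X \<in> MC"
  by (simp add: mat_carrier_def mat_sharp_def)

lemma mm_assoc: "mm (mm A B) D = mm A (mm B D)"
proof (intro ext)
  fix \<sigma> \<rho>
  have "mm (mm A B) D \<sigma> \<rho> = (\<Sum>\<tau>\<in>G. \<Sum>\<beta>\<in>G. A \<sigma> \<beta> * B \<beta> \<tau> * D \<tau> \<rho>)"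
    by (simp add: mat_mult_def sum_distrib_right)
  also have "\<dots> = (\<Sum>\<beta>\<in>G. \<Sum>\<tau>\<in>G. A \<sigma> \<beta> * B \<beta> \<tau> * D \<tau> \<rho>)" by (rule sum.swap)
  also have "\<dots> = mm A (mm B D) \<sigma> \<rho>" by (simp add: mat_mult_def sum_distrib_left mult.assoc)
  finally show "mm (mm A B) D \<sigma> \<rho> = mm A (mm B D) \<sigma> \<rho>" .
qed

lemma sh_add: "sh (mat_add X Y) = mat_add (sh X) (sh Y)"
  by (intro ext) (auto simp: mat_sharp_def mat_add_def sK_add algebra_simps)

lemma sh_mm: "sh (mm A B) = mm (sh B) (sh A)"
proof (intro ext)
  fix \<sigma> \<rho>
  show "sh (mm A B) \<sigma> \<rho> = mm (sh B) (sh A) \<sigma> \<rho>"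
  proof (cases "\<sigma> \<in> G \<and> \<rho> \<in> G")
    case True
    then have "sh (mm A B) \<sigma> \<rho> = (\<Sum>\<tau>\<in>G. inverse (a \<sigma>) * sK (B \<tau> \<sigma>) * sK (A \<rho> \<tau>) * a \<rho>)"
      by (simp add: mat_sharp_def mat_mult_def sK_sum sum_distrib_left sum_distrib_right sK_mul mult_ac)
    also have "\<dots> = mm (sh B) (sh A) \<sigma> \<rho>"
      unfolding mat_mult_def mat_sharp_def using True by (intro sum.cong refl) (auto simp: a_nonzero)
    finally show ?thesis .
  next
    case False
    then show ?thesis by (auto simp: mat_sharp_def mat_mult_def intro!: sum.neutral)
  qed
qed

lemma sh_sh: assumes "X \<in> MC" shows "sh (sh X) = X"
proof (intro ext)
  fix \<sigma> \<tau>
  show "sh (sh X) \<sigma> \<tau> = X \<sigma> \<tau>"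
  proof (cases "\<sigma> \<in> G \<and> \<tau> \<in> G")
    case True
    then have "sh (sh X) \<sigma> \<tau> = (inverse (a \<sigma>) * a \<sigma>) * (inverse (a \<tau>) * a \<tau>) * X \<sigma> \<tau>"
      by (simp add: mat_sharp_def sK_mul sK_inverse a_herm sK_sK mult_ac)
    then show ?thesis using True a_nonzero by simp
  next
    case False
    then show ?thesis using assms by (auto simp: mat_sharp_def mat_carrier_def)
  qed
qed

text \<open>The hermitian form \<langle>v, w\<rangle> = \<Sum> v_\<sigma>* a_\<sigma> w_\<sigma> on K^n, for which # is the adjoint,
  and the associated quadratic form v \<mapsto> \<langle>v, X v\<rangle> of a matrix X.\<close>

definition mat_vec :: "'k gmat \<Rightarrow> (('k \<Rightarrow> 'k) \<Rightarrow> 'k) \<Rightarrow> ('k \<Rightarrow> 'k) \<Rightarrow> 'k" where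
  "mat_vec X v = (\<lambda>\<sigma>. \<Sum>\<tau>\<in>G. X \<sigma> \<tau> * v \<tau>)"

definition hform :: "(('k \<Rightarrow> 'k) \<Rightarrow> 'k) \<Rightarrow> (('k \<Rightarrow> 'k) \<Rightarrow> 'k) \<Rightarrow> 'k" where
  "hform v w = (\<Sum>\<sigma>\<in>G. sK (v \<sigma>) * a \<sigma> * w \<sigma>)"

definition qform :: "'k gmat \<Rightarrow> (('k \<Rightarrow> 'k) \<Rightarrow> 'k) \<Rightarrow> 'k" where
  "qform X v = hform v (mat_vec X v)"

lemma mat_vec_mm: "mat_vec (mm A B) v = mat_vec A (mat_vec B v)"
proof
  fix \<sigma>
  have "mat_vec (mm A B) v \<sigma> = (\<Sum>\<tau>\<in>G. \<Sum>\<rho>\<in>G. A \<sigma> \<rho> * B \<rho> \<tau> * v \<tau>)"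
    by (simp add: mat_vec_def mat_mult_def sum_distrib_right)
  also have "\<dots> = (\<Sum>\<rho>\<in>G. \<Sum>\<tau>\<in>G. A \<sigma> \<rho> * B \<rho> \<tau> * v \<tau>)" by (rule sum.swap)
  also have "\<dots> = mat_vec A (mat_vec B v) \<sigma>" by (simp add: mat_vec_def sum_distrib_left mult.assoc)
  finally show "mat_vec (mm A B) v \<sigma> = mat_vec A (mat_vec B v) \<sigma>" .
qed

lemma hform_adjoint: "hform v (mat_vec Y u) = hform (mat_vec (sh Y) v) u"
proof -
  have "hform v (mat_vec Y u) = (\<Sum>\<sigma>\<in>G. \<Sum>\<alpha>\<in>G. sK (v \<sigma>) * a \<sigma> * Y \<sigma> \<alpha> * u \<alpha>)"
    by (simp add: hform_def mat_vec_def sum_distrib_left mult.assoc)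
  also have "\<dots> = (\<Sum>\<alpha>\<in>G. \<Sum>\<sigma>\<in>G. sK (v \<sigma>) * a \<sigma> * Y \<sigma> \<alpha> * u \<alpha>)" by (rule sum.swap)
  also have "\<dots> = hform (mat_vec (sh Y) v) u"
    unfolding hform_def
  proof (rule sum.cong[OF refl])
    fix \<alpha> assume \<alpha>: "\<alpha> \<in> G"
    have "sK (mat_vec (sh Y) v \<alpha>) * a \<alpha>
        = (\<Sum>\<sigma>\<in>G. (inverse (a \<alpha>) * a \<alpha>) * (Y \<sigma> \<alpha> * a \<sigma> * sK (v \<sigma>)))"
      using \<alpha> by (simp add: mat_vec_def mat_sharp_def sK_sum sum_distrib_left sum_distrib_right
          sK_mul sK_inverse a_herm sK_sK mult_ac)
    also have "\<dots> = (\<Sum>\<sigma>\<in>G. Y \<sigma> \<alpha> * a \<sigma> * sK (v \<sigma>))" using a_nonzero[OF \<alpha>] by simp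
    finally show "(\<Sum>\<sigma>\<in>G. sK (v \<sigma>) * a \<sigma> * Y \<sigma> \<alpha> * u \<alpha>) = sK (mat_vec (sh Y) v \<alpha>) * a \<alpha> * u \<alpha>"
      by (simp add: sum_distrib_left sum_distrib_right mult_ac)
  qed
  finally show ?thesis .
qed

lemma qform_congruence: "qform (mm (mm Y X) (sh Y)) v = qform X (mat_vec (sh Y) v)"
  unfolding qform_def by (simp add: mat_vec_mm hform_adjoint)

lemma qform_add: "qform (mat_add X Y) v = qform X v + qform Y v"
  by (simp add: qform_def hform_def mat_vec_def mat_add_def sum.distrib[symmetric] algebra_simps
      sum_distrib_left)

lemma qform_neg: "qform (mat_neg X) v = - qform X v"
  by (simp add: qform_def hform_def mat_vec_def mat_neg_def sum_negf[symmetric] sum_distrib_left)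

lemma qform_zero: "qform mat_zero v = 0"
  by (simp add: qform_def hform_def mat_vec_def mat_zero_def)

lemma qform_expand: "qform X v = (\<Sum>\<alpha>\<in>G. \<Sum>\<beta>\<in>G. sK (v \<alpha>) * a \<alpha> * X \<alpha> \<beta> * v \<beta>)"
  by (simp add: qform_def hform_def mat_vec_def sum_distrib_left mult.assoc)

lemma qform_support:
  assumes "S \<subseteq> G" "\<And>\<rho>. \<rho> \<notin> S \<Longrightarrow> v \<rho> = 0"
  shows "qform X v = (\<Sum>\<alpha>\<in>S. \<Sum>\<beta>\<in>S. sK (v \<alpha>) * a \<alpha> * X \<alpha> \<beta> * v \<beta>)"
proof -
  have "qform X v = (\<Sum>\<alpha>\<in>S. \<Sum>\<beta>\<in>G. sK (v \<alpha>) * a \<alpha> * X \<alpha> \<beta> * v \<beta>)"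
    unfolding qform_expand by (rule sum.mono_neutral_right[OF finite_G assms(1)]) (simp add: assms(2) sK_zero)
  also have "\<dots> = (\<Sum>\<alpha>\<in>S. \<Sum>\<beta>\<in>S. sK (v \<alpha>) * a \<alpha> * X \<alpha> \<beta> * v \<beta>)"
    by (intro sum.cong refl sum.mono_neutral_right[OF finite_G assms(1)]) (simp add: assms(2))
  finally show ?thesis .
qed

definition unit_vec :: "('k \<Rightarrow> 'k) \<Rightarrow> 'k \<Rightarrow> ('k \<Rightarrow> 'k) \<Rightarrow> 'k" where
  "unit_vec \<sigma> t = (\<lambda>\<rho>. if \<rho> = \<sigma> then t else 0)"

lemma qform_unit_vec: "\<sigma> \<in> G \<Longrightarrow> qform X (unit_vec \<sigma> t) = sK t * a \<sigma> * X \<sigma> \<sigma> * t"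
  by (subst qform_support[where S = "{\<sigma>}"]) (auto simp: unit_vec_def)

lemma qform_two_unit_vecs:
  assumes "\<sigma> \<in> G" "\<tau> \<in> G" "\<sigma> \<noteq> \<tau>"
  shows "qform X (\<lambda>\<rho>. unit_vec \<sigma> 1 \<rho> + unit_vec \<tau> t \<rho>)
     = qform X (unit_vec \<sigma> 1) + a \<sigma> * X \<sigma> \<tau> * t + sK t * a \<tau> * X \<tau> \<sigma> + qform X (unit_vec \<tau> t)"
  using assms by (simp add: qform_unit_vec sK_one)
    (subst qform_support[where S = "{\<sigma>, \<tau>}"], auto simp: unit_vec_def sK_one)

lemma qform_vanishing_diagonal:
  assumes vanish: "\<And>v. qform X v = 0" and \<rho>: "\<rho> \<in> G"
  shows "X \<rho> \<rho> = 0"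
  using vanish[of "unit_vec \<rho> 1"] a_nonzero[OF \<rho>] by (simp add: qform_unit_vec \<rho> sK_one)

lemma qform_vanishing_off_diagonal:
  assumes herm: "sh X = X" and vanish: "\<And>v. qform X v = 0"
    and st: "\<sigma> \<in> G" "\<tau> \<in> G" "\<sigma> \<noteq> \<tau>"
  shows "X \<sigma> \<tau> = 0"
proof -
  have "X \<tau> \<sigma> = inverse (a \<tau>) * sK (X \<sigma> \<tau>) * a \<sigma>"
    using herm st by (metis mat_sharp_def)
  then have hermitian: "a \<tau> * X \<tau> \<sigma> = sK (a \<sigma> * X \<sigma> \<tau>)"
    using a_nonzero[OF st(2)] by (simp add: sK_mul a_herm st)
  have "a \<sigma> * X \<sigma> \<tau> = 0"
  proof (rule trace_form_nondegenerate[where t = sK])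
    fix t
    have "0 = qform X (\<lambda>\<rho>. unit_vec \<sigma> 1 \<rho> + unit_vec \<tau> t \<rho>)" by (rule vanish[symmetric])
    also have "\<dots> = a \<sigma> * X \<sigma> \<tau> * t + sK t * (a \<tau> * X \<tau> \<sigma>)"
      using qform_vanishing_diagonal[OF vanish] st
      by (simp add: qform_two_unit_vecs qform_unit_vec mult.assoc)
    also have "sK t * (a \<tau> * X \<tau> \<sigma>) = sK (a \<sigma> * X \<sigma> \<tau> * t)"
      unfolding hermitian sK_mul[of _ t] by (rule mult.commute)
    finally show "a \<sigma> * X \<sigma> \<tau> * t + sK (a \<sigma> * X \<sigma> \<tau> * t) = 0" by simp
  qed (rule sK_mul)
  then show ?thesis using a_nonzero[OF st(1)] by simp
qed

lemma hermitian_qform_zero: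
  assumes X: "X \<in> MC" "sh X = X" and vanish: "\<And>v. qform X v = 0"
  shows "X = mat_zero"
proof (intro ext)
  fix \<sigma> \<tau>
  show "X \<sigma> \<tau> = mat_zero \<sigma> \<tau>"
    using X(1) qform_vanishing_diagonal[OF vanish] qform_vanishing_off_diagonal[OF X(2) vanish]
    by (cases "\<sigma> \<in> G \<and> \<tau> \<in> G \<and> \<sigma> \<noteq> \<tau>") (auto simp: mat_carrier_def mat_zero_def)
qed

definition mat_diag :: "(('k \<Rightarrow> 'k) \<Rightarrow> 'k) \<Rightarrow> 'k gmat" where
  "mat_diag d = (\<lambda>\<sigma> \<tau>. if \<sigma> \<in> G \<and> \<sigma> = \<tau> then d \<sigma> else 0)"

lemma mat_one_diag: "mat_one G = mat_diag (\<lambda>_. 1)"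
  by (simp add: mat_one_def mat_diag_def)

lemma lr_emb: "lr (cp_emb k) = mat_diag (\<lambda>\<sigma>. \<sigma> k)"
proof (intro ext)
  fix \<sigma> \<tau> show "lr (cp_emb k) \<sigma> \<tau> = mat_diag (\<lambda>\<sigma>. \<sigma> k) \<sigma> \<tau>"
    by (auto simp: lreg_def mat_diag_def cp_emb_mono cp_e_mono mul_mono_mono id_G) (auto simp: cp_mono_def)
qed

lemma mat_diag_MC: "mat_diag d \<in> MC"
  by (simp add: mat_diag_def mat_carrier_def)

lemma sh_mat_diag: "(\<And>\<sigma>. \<sigma> \<in> G \<Longrightarrow> sK (d \<sigma>) = d \<sigma>) \<Longrightarrow> sh (mat_diag d) = mat_diag d"
  by (intro ext) (auto simp: mat_sharp_def mat_diag_def a_nonzero sK_zero)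

lemma qform_diag: "qform (mat_diag d) v = (\<Sum>\<sigma>\<in>G. sK (v \<sigma>) * (a \<sigma> * d \<sigma>) * v \<sigma>)"
  unfolding qform_expand
proof (intro sum.cong refl)
  fix \<sigma> assume "\<sigma> \<in> G"
  then have "(\<Sum>\<beta>\<in>G. sK (v \<sigma>) * a \<sigma> * mat_diag d \<sigma> \<beta> * v \<beta>)
      = (\<Sum>\<beta>\<in>G. if \<sigma> = \<beta> then sK (v \<sigma>) * (a \<sigma> * d \<sigma>) * v \<sigma> else 0)"
    by (intro sum.cong refl) (auto simp: mat_diag_def)
  then show "(\<Sum>\<beta>\<in>G. sK (v \<sigma>) * a \<sigma> * mat_diag d \<sigma> \<beta> * v \<beta>) = sK (v \<sigma>) * (a \<sigma> * d \<sigma>) * v \<sigma>"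
    using \<open>\<sigma> \<in> G\<close> finite_G by simp
qed

lemma herm_cone_K_sandwich: "herm_cone_K sK N \<Longrightarrow> m \<in> N \<Longrightarrow> sK x * m * x \<in> N"
  unfolding unital_herm_cone_def by (metis UNIV_I sK_sK)

lemma qform_diag_in_cone:
  assumes "herm_cone_K sK N" "\<And>\<sigma>. \<sigma> \<in> G \<Longrightarrow> a \<sigma> * d \<sigma> \<in> N"
  shows "qform (mat_diag d) v \<in> N"
  unfolding qform_diag using assms by (intro herm_cone_sum[OF assms(1)]) (simp add: herm_cone_K_sandwich)

definition form_cone :: "'k set \<Rightarrow> 'k gmat set" where
  "form_cone N = {X \<in> MC. sh X = X \<and> (\<forall>v. qform X v \<in> N)}"

text \<open>Pointedness of the form cone: if X and -X have N-valued forms, the form of X vanishes.\<close>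
lemma form_cone_pointed:
  assumes N: "herm_cone_K sK N"
  shows "form_cone N \<inter> mat_neg ` form_cone N = {mat_zero}"
proof -
  have N_pointed: "N \<inter> uminus ` N = {0}"
    using N unfolding unital_herm_cone_def by blast
  have zero: "mat_zero \<in> form_cone N"
  proof -
    have "sh mat_zero = mat_zero" by (intro ext) (simp add: mat_sharp_def mat_zero_def sK_zero)
    moreover have "mat_zero \<in> MC" by (simp add: mat_carrier_def mat_zero_def)
    ultimately show ?thesis using N_pointed by (auto simp: form_cone_def qform_zero)
  qed
  have pointed: "X = mat_zero" if "X \<in> form_cone N" "Y \<in> form_cone N" "X = mat_neg Y" for X Y
  proof (rule hermitian_qform_zero)
    fix v
    have "qform X v \<in> N" "- qform X v \<in> N"
      using that by (auto simp: form_cone_def qform_neg)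
    then show "qform X v = 0" using N_pointed by (metis IntI image_eqI minus_minus singletonD)
  qed (use that(1) in \<open>simp_all add: form_cone_def\<close>)
  show ?thesis
  proof (intro equalityI subsetI)
    fix X assume "X \<in> form_cone N \<inter> mat_neg ` form_cone N"
    then show "X \<in> {mat_zero}" using pointed by blast
  next
    fix X :: "'k gmat" assume "X \<in> {mat_zero}"
    moreover have "mat_neg mat_zero = mat_zero" by (simp add: mat_neg_def mat_zero_def)
    ultimately show "X \<in> form_cone N \<inter> mat_neg ` form_cone N"
      using zero by (metis IntI image_eqI singletonD)
  qed
qed

lemma form_cone_is_cone:
  assumes N: "herm_cone_K sK N" and a_N: "\<And>\<sigma>. \<sigma> \<in> G \<Longrightarrow> a \<sigma> \<in> N"
  shows "unital_herm_cone MC mat_add mm mat_neg mat_zero (mat_one G) sh (form_cone N)"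
proof -
  have N_add: "x \<in> N \<Longrightarrow> y \<in> N \<Longrightarrow> x + y \<in> N" for x y
    using N unfolding unital_herm_cone_def by blast
  have one: "mat_one G \<in> form_cone N"
    unfolding form_cone_def mat_one_diag
    using qform_diag_in_cone[OF N] a_N by (simp add: mat_diag_MC sh_mat_diag sK_one)
  have add: "mat_add X Y \<in> form_cone N" if "X \<in> form_cone N" "Y \<in> form_cone N" for X Y
  proof -
    have "mat_add X Y \<in> MC" using that by (auto simp: form_cone_def mat_carrier_def mat_add_def)
    then show ?thesis using that by (simp add: form_cone_def sh_add qform_add N_add)
  qed
  have congruence: "mm (mm A X) (sh A) \<in> form_cone N" if "A \<in> MC" "X \<in> form_cone N" for A X
  proof -
    have X: "X \<in> MC" "sh X = X" using that(2) by (simp_all add: form_cone_def)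
    have "sh (mm (mm A X) (sh A)) = mm (mm (sh (sh A)) (sh X)) (sh A)"
      by (simp only: sh_mm mm_assoc)
    then have "sh (mm (mm A X) (sh A)) = mm (mm A X) (sh A)"
      by (simp only: sh_sh[OF that(1)] X(2))
    then show ?thesis
      using that by (simp add: form_cone_def mm_MC sh_MC qform_congruence)
  qed
  have "form_cone N \<subseteq> {X \<in> MC. sh X = X}" by (auto simp: form_cone_def)
  then show ?thesis
    unfolding unital_herm_cone_def using one add congruence form_cone_pointed[OF N] by blast
qed

lemma form_cone_scalars:
  assumes N: "herm_cone_K sK N" and invariant: "\<forall>n\<in>N. \<forall>\<sigma>\<in>G. a \<sigma> * \<sigma> n \<in> N"
  shows "{k. lr (cp_emb k) \<in> form_cone N} = N"
proof (intro set_eqI iffI; simp)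
  fix k assume k: "k \<in> N"
  have "sK k = k" using N k unfolding unital_herm_cone_def by blast
  then show "lr (cp_emb k) \<in> form_cone N"
    unfolding form_cone_def lr_emb
    using qform_diag_in_cone[OF N] invariant k by (simp add: mat_diag_MC sh_mat_diag sK_commute)
next
  fix k assume "lr (cp_emb k) \<in> form_cone N"
  then have "qform (lr (cp_emb k)) (unit_vec id 1) \<in> N" by (simp add: form_cone_def)
  then show "k \<in> N" by (simp add: qform_unit_vec id_G lr_emb mat_diag_def a_id sK_one)
qed

text \<open>(2) \<Longrightarrow> (1): conjugating n \<in> K by e_\<sigma> gives a_\<sigma> n^\<sigma>.\<close>
lemma cone_D_conjugate_scalar:
  assumes M: "herm_cone_D G \<Phi> s M" and n: "cp_emb n \<in> M" and \<sigma>: "\<sigma> \<in> G"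
  shows "cp_emb (a \<sigma> * \<sigma> n) \<in> M"
proof -
  have "mul (mul (s (cp_e \<sigma>)) (cp_emb n)) (s (s (cp_e \<sigma>))) \<in> M"
    using M n s_C[OF e_C[OF \<sigma>]] unfolding unital_herm_cone_def by blast
  moreover have "mul (mul (s (cp_e \<sigma>)) (cp_emb n)) (s (s (cp_e \<sigma>))) = cp_emb (a \<sigma> * \<sigma> n)"
  proof -
    have commute: "mul (cp_emb n) (cp_e \<sigma>) = mul (cp_e \<sigma>) (cp_emb (\<sigma> n))"
      by (simp add: cp_emb_mono cp_e_mono mul_mono_mono \<sigma> id_G)
    have "mul (mul (s (cp_e \<sigma>)) (cp_emb n)) (s (s (cp_e \<sigma>)))
        = mul (s (cp_e \<sigma>)) (mul (cp_emb n) (cp_e \<sigma>))"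
      by (simp add: s_s e_C s_C emb_C \<sigma> mul_assoc)
    also have "\<dots> = mul (mul (s (cp_e \<sigma>)) (cp_e \<sigma>)) (cp_emb (\<sigma> n))"
      by (simp add: commute e_C s_C emb_C \<sigma> mul_assoc)
    finally show ?thesis by (simp add: a_emb \<sigma> mul_emb_emb)
  qed
  ultimately show ?thesis by simp
qed

text \<open>(3) \<Longrightarrow> (2): hermitian cones pull back along the regular representation.\<close>
lemma cone_D_from_matrices:
  assumes "unital_herm_cone MC mat_add mm mat_neg mat_zero (mat_one G) sh L"
  shows "herm_cone_D G \<Phi> s {x \<in> C. lr x \<in> L}"
  by (rule unital_herm_cone_preimage[OF assms])
    (simp_all add: one_C zero_C mul_C add_C s_C lr_C lr_inj lr_one lr_zero lr_add lr_mul lr_neg lr_s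
      cp_neg_zero)

end

text \<open>The theorem: the cycle (1) \<Rightarrow> (3) \<Rightarrow> (2) \<Rightarrow> (1), where (1) applied to n = 1 shows that N
  contains every a_\<sigma>.\<close>
theorem corollary4p3:
  fixes G :: "('k::field_char_0 \<Rightarrow> 'k) set"
    and \<Phi> :: "('k \<Rightarrow> 'k) \<Rightarrow> ('k \<Rightarrow> 'k) \<Rightarrow> 'k"
    and s :: "'k cp \<Rightarrow> 'k cp"
    and N :: "'k set"
  assumes "finite_aut_group G"
    and "normalized_cocycle G \<Phi>"
    and "cp_division_algebra G \<Phi>"
    and "cp_involution G \<Phi> s"
    and "\<forall>k. \<exists>k'. s (cp_emb k) = cp_emb k'"
    and "\<forall>\<sigma>\<in>G. \<exists>k. cp_mult G \<Phi> (s (cp_e \<sigma>)) (cp_e \<sigma>) = cp_emb k"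
    and "\<exists>M0. herm_cone_K (star_K s) M0 \<and> (\<forall>\<sigma>\<in>G. a_coef G \<Phi> s \<sigma> \<in> M0)"
    and "herm_cone_K (star_K s) N"
  shows "((\<forall>n\<in>N. \<forall>\<sigma>\<in>G. a_coef G \<Phi> s \<sigma> * \<sigma> n \<in> N)
           \<longleftrightarrow> (\<exists>M. herm_cone_D G \<Phi> s M \<and> N = {k. cp_emb k \<in> M}))
       \<and> ((\<exists>M. herm_cone_D G \<Phi> s M \<and> N = {k. cp_emb k \<in> M})
           \<longleftrightarrow> (\<exists>L. unital_herm_cone (mat_carrier G) mat_add (mat_mult G) mat_neg mat_zero
                       (mat_one G) (mat_sharp G (a_coef G \<Phi> s) (star_K s)) L
                   \<and> N = {k. lreg G \<Phi> (cp_emb k) \<in> L}))"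
proof -
  interpret crossed_product_involution G \<Phi> s
    using assms(1,2,4,5,6) by unfold_locales
  let ?P1 = "\<forall>n\<in>N. \<forall>\<sigma>\<in>G. a \<sigma> * \<sigma> n \<in> N"
  let ?P2 = "\<exists>M. herm_cone_D G \<Phi> s M \<and> N = {k. cp_emb k \<in> M}"
  let ?P3 = "\<exists>L. unital_herm_cone MC mat_add mm mat_neg mat_zero (mat_one G) sh L
                 \<and> N = {k. lr (cp_emb k) \<in> L}"
  have "?P3" if ?P1
  proof -
    have "1 \<in> N" using assms(8) unfolding unital_herm_cone_def by blast
    then have "a \<sigma> \<in> N" if "\<sigma> \<in> G" for \<sigma>
      using \<open>?P1\<close> that by (metis aut_G field_aut_one mult_1_right)
    then show ?P3 using form_cone_is_cone[OF assms(8)] form_cone_scalars[OF assms(8) that] by metis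
  qed
  moreover have "?P2" if ?P3
  proof -
    obtain L where L: "unital_herm_cone MC mat_add mm mat_neg mat_zero (mat_one G) sh L"
      and N: "N = {k. lr (cp_emb k) \<in> L}" using \<open>?P3\<close> by blast
    have "N = {k. cp_emb k \<in> {x \<in> C. lr x \<in> L}}" using N emb_C by blast
    then show ?P2 using cone_D_from_matrices[OF L] by blast
  qed
  moreover have "?P1" if ?P2
    using \<open>?P2\<close> cone_D_conjugate_scalar by blast
  ultimately show ?thesis by blast
qed

end
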